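(* Let $N\ge1$, $K\ge2$ be integers with $N$ divisible by $K$, put $m=N/K$, and let $\alpha\in[1,2]$. Let $\sigma$ be a mixed strategy of $\mathcal{B}_\alpha(N,K)$ such that either (a) for every battlefield $k$ the marginal $\sigma_k$ is the uniform distribution on the odd integers $\{1,3,\ldots,2m-1\}$, or (b) for every battlefield $k$ the marginal $\sigma_k$ is the uniform distribution on the even integers $\{0,2,\ldots,2m\}$. Then $\sigma$ is a symmetric equilibrium strategy of $\mathcal{B}_\alpha(N,K)$.
   Context: Fix integers $N\ge1$, $K\ge2$ and a real number $\alpha$. The Colonel Blotto game $\mathcal{B}_\alpha(N,K)$ is the two-player simultaneous-move game with players $A,B$, each with pure strategy set $S=\{s\in\{0,1,\ldots,N\}^K:\sum_{k=1}^K s_k=N\}$, in which the payoff of player $i$ at the pure profile $(s^i,s^{-i})$ is $\pi^i(s^i,s^{-i})=\sum_{k=1}^K\big(\mathbf 1[s^i_k>s^{-i}_k]+\tfrac{\alpha}{2}\mathbf 1[s^i_k=s^{-i}_k]\big)$. Mixed strategies are probability distributions on $S$, with expected payoffs under independent randomization. A symmetric equilibrium strategy is a mixed strategy $\sigma$ such that $(\sigma,\sigma)$ is a Nash equilibrium. For a mixed strategy $\sigma$ and battlefield $k$, the marginal $\sigma_k$ is the distribution of $s_k$ when $s\sim\sigma$. *)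

theory Defs
  imports "HOL-Probability.Probability"
begin

definition blotto_pure :: "nat \<Rightarrow> nat \<Rightarrow> (nat \<Rightarrow> nat) set" where
  "blotto_pure N K = {s. (\<forall>k. K \<le> k \<longrightarrow> s k = 0) \<and> (\<Sum>k<K. s k) = N}"

definition blotto_payoff :: "real \<Rightarrow> nat \<Rightarrow> (nat \<Rightarrow> nat) \<Rightarrow> (nat \<Rightarrow> nat) \<Rightarrow> real" where
  "blotto_payoff \<alpha> K s t =
     (\<Sum>k<K. (if s k > t k then 1 else 0) + (\<alpha> / 2) * (if s k = t k then 1 else 0))"

definition blotto_mixed :: "nat \<Rightarrow> nat \<Rightarrow> (nat \<Rightarrow> nat) pmf set" where
  "blotto_mixed N K = {\<sigma>. set_pmf \<sigma> \<subseteq> blotto_pure N K}"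

definition blotto_exp_payoff ::
  "real \<Rightarrow> nat \<Rightarrow> (nat \<Rightarrow> nat) pmf \<Rightarrow> (nat \<Rightarrow> nat) pmf \<Rightarrow> real" where
  "blotto_exp_payoff \<alpha> K \<sigma> \<tau> =
     measure_pmf.expectation (pair_pmf \<sigma> \<tau>) (\<lambda>(s, t). blotto_payoff \<alpha> K s t)"

text \<open>(\<sigma>, \<sigma>) is a Nash equilibrium: no player gains by a unilateral deviation to
  any mixed strategy (the game is symmetric, player A's and B's payoffs are given
  by the same function with the roles exchanged).\<close>
definition blotto_symmetric_eq :: "nat \<Rightarrow> nat \<Rightarrow> real \<Rightarrow> (nat \<Rightarrow> nat) pmf \<Rightarrow> bool" where
  "blotto_symmetric_eq N K \<alpha> \<sigma> \<longleftrightarrow>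
     \<sigma> \<in> blotto_mixed N K \<and>
     (\<forall>\<tau> \<in> blotto_mixed N K.
        blotto_exp_payoff \<alpha> K \<tau> \<sigma> \<le> blotto_exp_payoff \<alpha> K \<sigma> \<sigma>)"

definition marginal :: "(nat \<Rightarrow> nat) pmf \<Rightarrow> nat \<Rightarrow> nat pmf" where
  "marginal \<sigma> k = map_pmf (\<lambda>s. s k) \<sigma>"

end

theory Submission
  imports Defs
begin

text \<open>Against \<sigma>, a pure strategy s earns \<open>\<Sum>k<K. F (s k)\<close>, where F is the expected
  payoff of a single battlefield against the uniform distribution on the progression
  e, e+2, ..., e+2(n-1) (with e = 1, n = m for odd marginals and e = 0, n = m+1 for even
  ones). For \<alpha> \<in> [1,2] one has F x \<le> (x - e + \<alpha>) / (2n), with equality when x lies on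
  the progression. Summing this linear bound over the battlefields gives a constant, since
  every pure strategy allocates N in total. Hence no pure strategy earns more than this
  constant against \<sigma>, while every strategy in the support of \<sigma> earns exactly it.\<close>

definition battle_payoff :: "real \<Rightarrow> nat \<Rightarrow> nat \<Rightarrow> real" where
  "battle_payoff \<alpha> x y = (if x > y then 1 else 0) + (\<alpha> / 2) * (if x = y then 1 else 0)"

lemma blotto_payoff_eq_sum_battle_payoff:
  "blotto_payoff \<alpha> K s t = (\<Sum>k<K. battle_payoff \<alpha> (s k) (t k))"
  by (simp add: blotto_payoff_def battle_payoff_def)

lemma battle_payoff_nonneg: "0 \<le> \<alpha> \<Longrightarrow> 0 \<le> battle_payoff \<alpha> x y"
  by (simp add: battle_payoff_def)

lemma battle_payoff_le: "0 \<le> \<alpha> \<Longrightarrow> battle_payoff \<alpha> x y \<le> 1 + \<alpha>"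
  by (simp add: battle_payoff_def)

lemma blotto_payoff_nonneg: "0 \<le> \<alpha> \<Longrightarrow> 0 \<le> blotto_payoff \<alpha> K s t"
  unfolding blotto_payoff_eq_sum_battle_payoff by (simp add: sum_nonneg battle_payoff_nonneg)

lemma blotto_payoff_le: "0 \<le> \<alpha> \<Longrightarrow> blotto_payoff \<alpha> K s t \<le> real K * (1 + \<alpha>)"
  unfolding blotto_payoff_eq_sum_battle_payoff
  using sum_bounded_above[of "{..<K}" "\<lambda>k. battle_payoff \<alpha> (s k) (t k)" "1 + \<alpha>"]
  by (simp add: battle_payoff_le)

lemma integrable_measure_pmf_bounded:
  fixes f :: "'a \<Rightarrow> real"
  assumes "\<And>x. \<bar>f x\<bar> \<le> C"
  shows "integrable (measure_pmf M) f"
  by (rule measure_pmf.integrable_const_bound[where B = C]) (use assms in auto)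

lemma expectation_pair_pmf_iterated:
  fixes f :: "'a \<times> 'b \<Rightarrow> real"
  assumes nonneg: "\<And>p. 0 \<le> f p" and bounded: "\<And>p. f p \<le> C"
  shows "measure_pmf.expectation (pair_pmf M1 M2) f
       = measure_pmf.expectation M1 (\<lambda>a. measure_pmf.expectation M2 (\<lambda>b. f (a, b)))"
proof -
  have inner: "(\<integral>\<^sup>+b. ennreal (f (a, b)) \<partial>M2)
             = ennreal (measure_pmf.expectation M2 (\<lambda>b. f (a, b)))" for a
    by (rule nn_integral_eq_integral)
       (use nonneg bounded in \<open>auto intro: integrable_measure_pmf_bounded[where C = C]\<close>)
  have "measure_pmf.expectation (pair_pmf M1 M2) f
      = enn2real (\<integral>\<^sup>+a. \<integral>\<^sup>+b. ennreal (f (a, b)) \<partial>M2 \<partial>M1)"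
    by (simp add: integral_eq_nn_integral nonneg nn_integral_pair_pmf')
  also have "\<dots> = enn2real (\<integral>\<^sup>+a. ennreal (measure_pmf.expectation M2 (\<lambda>b. f (a, b))) \<partial>M1)"
    by (simp add: inner)
  also have "\<dots> = measure_pmf.expectation M1 (\<lambda>a. measure_pmf.expectation M2 (\<lambda>b. f (a, b)))"
    by (simp add: integral_eq_nn_integral integral_nonneg_AE nonneg)
  finally show ?thesis .
qed

lemma blotto_exp_payoff_iterated:
  assumes "0 \<le> \<alpha>"
  shows "blotto_exp_payoff \<alpha> K \<tau> \<sigma>
       = measure_pmf.expectation \<tau> (\<lambda>s. measure_pmf.expectation \<sigma> (blotto_payoff \<alpha> K s))"
  unfolding blotto_exp_payoff_def
  by (subst expectation_pair_pmf_iterated[where C = "real K * (1 + \<alpha>)"])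
     (auto simp: blotto_payoff_nonneg blotto_payoff_le assms)

lemma expectation_blotto_payoff_marginals:
  assumes "0 \<le> \<alpha>"
  shows "measure_pmf.expectation \<sigma> (blotto_payoff \<alpha> K s)
       = (\<Sum>k<K. measure_pmf.expectation (marginal \<sigma> k) (battle_payoff \<alpha> (s k)))"
proof -
  have "measure_pmf.expectation \<sigma> (blotto_payoff \<alpha> K s)
      = (\<Sum>k<K. measure_pmf.expectation \<sigma> (\<lambda>t. battle_payoff \<alpha> (s k) (t k)))"
    unfolding blotto_payoff_eq_sum_battle_payoff
    by (intro Bochner_Integration.integral_sum integrable_measure_pmf_bounded[where C = "1 + \<alpha>"])
       (simp add: assms battle_payoff_nonneg battle_payoff_le)
  then show ?thesis
    by (simp add: marginal_def)
qed

lemma blotto_symmetric_eqI: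
  assumes "0 \<le> \<alpha>" and \<sigma>: "\<sigma> \<in> blotto_mixed N K"
    and le: "\<And>s. s \<in> blotto_pure N K \<Longrightarrow> measure_pmf.expectation \<sigma> (blotto_payoff \<alpha> K s) \<le> v"
    and eq: "\<And>s. s \<in> set_pmf \<sigma> \<Longrightarrow> measure_pmf.expectation \<sigma> (blotto_payoff \<alpha> K s) = v"
  shows "blotto_symmetric_eq N K \<alpha> \<sigma>"
proof -
  have bounded: "\<bar>measure_pmf.expectation \<sigma> (blotto_payoff \<alpha> K s)\<bar> \<le> real K * (1 + \<alpha>)" for s
    using \<open>0 \<le> \<alpha>\<close> blotto_payoff_nonneg blotto_payoff_le
    by (auto intro!: integral_nonneg_AE measure_pmf.integral_le_const
        integrable_measure_pmf_bounded[where C = "real K * (1 + \<alpha>)"])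
  have deviation: "blotto_exp_payoff \<alpha> K \<tau> \<sigma> \<le> v" if \<tau>: "\<tau> \<in> blotto_mixed N K" for \<tau>
  proof -
    have "measure_pmf.expectation \<tau> (\<lambda>s. measure_pmf.expectation \<sigma> (blotto_payoff \<alpha> K s))
        \<le> measure_pmf.expectation \<tau> (\<lambda>_. v)"
      using \<tau> le
      by (intro integral_mono_AE integrable_measure_pmf_bounded[where C = "real K * (1 + \<alpha>)", OF bounded])
         (auto simp: AE_measure_pmf_iff blotto_mixed_def)
    then show ?thesis
      by (simp add: blotto_exp_payoff_iterated \<open>0 \<le> \<alpha>\<close>)
  qed
  have "blotto_exp_payoff \<alpha> K \<sigma> \<sigma> = measure_pmf.expectation \<sigma> (\<lambda>_. v)"
    unfolding blotto_exp_payoff_iterated[OF \<open>0 \<le> \<alpha>\<close>]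
    by (intro integral_cong_AE) (auto simp: AE_measure_pmf_iff eq)
  then show ?thesis
    unfolding blotto_symmetric_eq_def using \<sigma> deviation by simp
qed

text \<open>The bound \<open>2 * real n\<close> is only there to make the induction go through: when x
  exceeds every point of the progression it is the sharper of the two.\<close>
lemma sum_battle_payoff_progression_le:
  assumes "1 \<le> \<alpha>" "\<alpha> \<le> 2" "e \<le> 1"
  shows "2 * (\<Sum>i<n. battle_payoff \<alpha> x (2 * i + e)) \<le> min (2 * real n) (real x - real e + \<alpha>)"
proof (induction n)
  case 0
  then show ?case using assms by simp
next
  case (Suc n)
  consider "x > 2 * n + e" | "x = 2 * n + e" | "x < 2 * n + e" by linarith
  then show ?case
    by cases (use Suc assms in \<open>auto simp: battle_payoff_def\<close>)
qed

lemma sum_battle_payoff_progression_eq: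
  "(\<Sum>i<n. battle_payoff \<alpha> (2 * j + e) (2 * i + e)) = (if n \<le> j then real n else real j + \<alpha> / 2)"
proof (induction n)
  case 0
  then show ?case by simp
next
  case (Suc n)
  consider "n < j" | "n = j" | "n > j" by linarith
  then show ?case
    by cases (use Suc in \<open>auto simp: battle_payoff_def\<close>)
qed

lemma expectation_battle_payoff_progression:
  fixes e n x :: nat
  defines "P \<equiv> (\<lambda>i. 2 * i + e) ` {..<n}"
  assumes "1 \<le> \<alpha>" "\<alpha> \<le> 2" "e \<le> 1" "n \<ge> 1"
  shows "measure_pmf.expectation (pmf_of_set P) (battle_payoff \<alpha> x) \<le> (real x - real e + \<alpha>) / (2 * real n)"
    and "x \<in> P \<Longrightarrow>
      measure_pmf.expectation (pmf_of_set P) (battle_payoff \<alpha> x) = (real x - real e + \<alpha>) / (2 * real n)"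
proof -
  have inj: "inj_on (\<lambda>i. 2 * i + e) {..<n}"
    by (auto simp: inj_on_def)
  have "P \<noteq> {}"
    using \<open>n \<ge> 1\<close> by (auto simp: P_def lessThan_empty_iff)
  then have expectation: "measure_pmf.expectation (pmf_of_set P) (battle_payoff \<alpha> x)
      = (\<Sum>i<n. battle_payoff \<alpha> x (2 * i + e)) / n"
    by (simp add: P_def integral_pmf_of_set sum.reindex[OF inj] card_image[OF inj])
  show "measure_pmf.expectation (pmf_of_set P) (battle_payoff \<alpha> x) \<le> (real x - real e + \<alpha>) / (2 * real n)"
    using sum_battle_payoff_progression_le[OF assms(2-4), where n = n and x = x] \<open>n \<ge> 1\<close>
    by (simp add: expectation field_simps)
  assume "x \<in> P"
  then obtain j where j: "j < n" "x = 2 * j + e"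
    by (auto simp: P_def)
  then have "(\<Sum>i<n. battle_payoff \<alpha> x (2 * i + e)) = real j + \<alpha> / 2"
    using sum_battle_payoff_progression_eq[where n = n and j = j and e = e and \<alpha> = \<alpha>] by simp
  then show "measure_pmf.expectation (pmf_of_set P) (battle_payoff \<alpha> x) = (real x - real e + \<alpha>) / (2 * real n)"
    unfolding expectation using j \<open>n \<ge> 1\<close> by (simp add: field_simps)
qed

lemma blotto_symmetric_eq_progression_marginals:
  fixes N K n e :: nat
  assumes "n \<ge> 1" "e \<le> 1" "1 \<le> \<alpha>" "\<alpha> \<le> 2"
    and \<sigma>: "\<sigma> \<in> blotto_mixed N K"
    and marginals: "\<forall>k<K. marginal \<sigma> k = pmf_of_set ((\<lambda>i. 2 * i + e) ` {..<n})"
  shows "blotto_symmetric_eq N K \<alpha> \<sigma>"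
proof -
  define P where "P = (\<lambda>i::nat. 2 * i + e) ` {..<n}"
  define F where "F x = (real x - real e + \<alpha>) / (2 * real n)" for x
  have payoff: "measure_pmf.expectation \<sigma> (blotto_payoff \<alpha> K s)
      = (\<Sum>k<K. measure_pmf.expectation (pmf_of_set P) (battle_payoff \<alpha> (s k)))" for s
    using expectation_blotto_payoff_marginals[of \<alpha> \<sigma> K s] marginals \<open>1 \<le> \<alpha>\<close>
    by (simp add: P_def)
  have linear: "(\<Sum>k<K. F (s k)) = (real N - real K * real e + real K * \<alpha>) / (2 * real n)"
    if "s \<in> blotto_pure N K" for s
  proof -
    have "(\<Sum>k<K. real (s k)) = real N"
      using that unfolding blotto_pure_def by (simp flip: of_nat_sum)
    then show ?thesis
      by (simp add: F_def sum_divide_distrib[symmetric] sum.distrib sum_subtractf)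
  qed
  show ?thesis
  proof (rule blotto_symmetric_eqI[OF _ \<sigma>])
    fix s assume "s \<in> blotto_pure N K"
    then show "measure_pmf.expectation \<sigma> (blotto_payoff \<alpha> K s)
        \<le> (real N - real K * real e + real K * \<alpha>) / (2 * real n)"
      unfolding payoff linear[OF \<open>s \<in> blotto_pure N K\<close>, symmetric]
      using expectation_battle_payoff_progression(1)[OF assms(3,4,2,1)]
      by (intro sum_mono) (simp add: P_def F_def)
  next
    fix s assume s: "s \<in> set_pmf \<sigma>"
    have "s k \<in> P" if "k < K" for k
    proof -
      have "s k \<in> set_pmf (marginal \<sigma> k)"
        using s by (auto simp: marginal_def)
      then show ?thesis
        using marginals that \<open>n \<ge> 1\<close> by (auto simp: P_def lessThan_empty_iff)
    qed
    moreover have "s \<in> blotto_pure N K"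
      using s \<sigma> by (auto simp: blotto_mixed_def)
    ultimately show "measure_pmf.expectation \<sigma> (blotto_payoff \<alpha> K s)
        = (real N - real K * real e + real K * \<alpha>) / (2 * real n)"
      unfolding payoff linear[OF \<open>s \<in> blotto_pure N K\<close>, symmetric]
      using expectation_battle_payoff_progression(2)[OF assms(3,4,2,1)]
      by (intro sum.cong) (simp_all add: P_def F_def)
  qed (use \<open>1 \<le> \<alpha>\<close> in simp)
qed

lemma odd_upto_eq_progression:
  "m \<ge> 1 \<Longrightarrow> {j::nat. odd j \<and> j \<le> 2 * m - 1} = (\<lambda>i. 2 * i + 1) ` {..<m}"
  by (auto elim!: oddE simp: image_iff)

lemma even_upto_eq_progression:
  "{j::nat. even j \<and> j \<le> 2 * m} = (\<lambda>i. 2 * i + 0) ` {..<m + 1}"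
  by (auto elim!: evenE simp: image_iff)

theorem mainTheorem13:
  fixes N K m :: nat and \<alpha> :: real and \<sigma> :: "(nat \<Rightarrow> nat) pmf"
  assumes "N \<ge> 1" and "K \<ge> 2" and "K dvd N" and "m = N div K"
    and "1 \<le> \<alpha>" and "\<alpha> \<le> 2"
    and "\<sigma> \<in> blotto_mixed N K"
    and "(\<forall>k<K. marginal \<sigma> k = pmf_of_set {j. odd j \<and> j \<le> 2 * m - 1})
       \<or> (\<forall>k<K. marginal \<sigma> k = pmf_of_set {j. even j \<and> j \<le> 2 * m})"
  shows "blotto_symmetric_eq N K \<alpha> \<sigma>"
proof -
  have "m \<ge> 1"
    using assms(1-4) by (auto elim!: dvdE)
  from assms(8) show ?thesis
  proof
    assume "\<forall>k<K. marginal \<sigma> k = pmf_of_set {j. odd j \<and> j \<le> 2 * m - 1}"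
    then have "\<forall>k<K. marginal \<sigma> k = pmf_of_set ((\<lambda>i. 2 * i + 1) ` {..<m})"
      by (simp only: odd_upto_eq_progression[OF \<open>m \<ge> 1\<close>])
    then show ?thesis
      using blotto_symmetric_eq_progression_marginals \<open>m \<ge> 1\<close> assms(5-7) by blast
  next
    assume "\<forall>k<K. marginal \<sigma> k = pmf_of_set {j. even j \<and> j \<le> 2 * m}"
    then have "\<forall>k<K. marginal \<sigma> k = pmf_of_set ((\<lambda>i. 2 * i + 0) ` {..<m + 1})"
      by (simp only: even_upto_eq_progression)
    then show ?thesis
      using blotto_symmetric_eq_progression_marginals[of "m + 1" 0] assms(5-7) by simp
  qed
qed

end
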